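(* Let $G$ be the graph with vertex set $\mathbb{Z}_{16}$ in which $i$ and $j$ are adjacent iff $i-j\in\{\pm1,\pm2,\pm4\}\pmod{16}$, and let $H$ be the graph with vertex set $\mathbb{Z}_{16}$ in which $i$ and $j$ are adjacent iff $i-j\in\{\pm1,\pm3,\pm4\}\pmod{16}$. Then $G$ and $H$ are distinguishable by EB-1WL but not distinguishable by NC-1WL.
   Context: All graphs are finite, simple and undirected; $N(v)$ denotes the neighborhood of $v$. An ordered edge of $G=(V,E)$ is a pair $(u,v)$ with $\{u,v\}\in E$. EB-1WL coloring: $\mathrm{eb}^{(0)}(G,(u,v))=1$ for every ordered edge, and $\mathrm{eb}^{(\ell+1)}(G,(u,v)) = \big(\mathrm{eb}^{(\ell)}(G,(u,v)),\ \{\!\{\mathrm{eb}^{(\ell)}(G,(u,x)) : x\in N(u)\}\!\},\ \{\!\{(\mathrm{eb}^{(\ell)}(G,(u,y)),\mathrm{eb}^{(\ell)}(G,(v,y))) : y\in N(u)\cap N(v)\}\!\},\ \{\!\{\mathrm{eb}^{(\ell)}(G,(v,z)) : z\in N(v)\}\!\}\big)$. $\mathrm{eb}^{(\ell)}(G)$ is the multiset of $\mathrm{eb}^{(\ell)}(G,(u,v))$ over all ordered edges. Graphs are distinguishable by EB-1WL if they have different numbers of vertices or there is $\ell$ with $\mathrm{eb}^{(\ell)}(G)\neq\mathrm{eb}^{(\ell)}(H)$. NC-1WL coloring of vertices: $\mathrm{nc}^{(0)}(G,v)=1$ and $\mathrm{nc}^{(\ell+1)}(G,v)=\big(\mathrm{nc}^{(\ell)}(G,v),\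 \{\!\{\mathrm{nc}^{(\ell)}(G,u): u\in N(v)\}\!\},\ \{\!\{(\mathrm{nc}^{(\ell)}(G,u),\mathrm{nc}^{(\ell)}(G,w)) : u,w\in N(v),\ \{u,w\}\in E\}\!\}\big)$. $\mathrm{nc}^{(\ell)}(G)=\{\!\{\mathrm{nc}^{(\ell)}(G,v): v\in V\}\!\}$; graphs are distinguishable by NC-1WL if there is $\ell$ with $\mathrm{nc}^{(\ell)}(G)\neq\mathrm{nc}^{(\ell)}(H)$. Colors are nested tuples/multisets, comparable across graphs. *)

theory Defs
  imports Main "HOL-Library.Multiset"
begin

text \<open>Graphs are given by a finite vertex set V and a symmetric irreflexive
adjacency relation E. Colours are nested tuples/multisets, represented by a
single datatype so that colours from different graphs are comparable.\<close>

datatype color =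
    CInit
  | CEB color "color multiset" "(color \<times> color) multiset" "color multiset"
  | CNC color "color multiset" "(color \<times> color) multiset"

definition nbhd :: "'a set \<Rightarrow> ('a \<Rightarrow> 'a \<Rightarrow> bool) \<Rightarrow> 'a \<Rightarrow> 'a set" where
  "nbhd V E v = {x \<in> V. E v x}"

fun eb :: "nat \<Rightarrow> 'a set \<Rightarrow> ('a \<Rightarrow> 'a \<Rightarrow> bool) \<Rightarrow> 'a \<Rightarrow> 'a \<Rightarrow> color" where
  "eb 0 V E u v = CInit"
| "eb (Suc l) V E u v =
     CEB (eb l V E u v)
         (image_mset (\<lambda>x. eb l V E u x) (mset_set (nbhd V E u)))
         (image_mset (\<lambda>y. (eb l V E u y, eb l V E v y))
             (mset_set (nbhd V E u \<inter> nbhd V E v)))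
         (image_mset (\<lambda>z. eb l V E v z) (mset_set (nbhd V E v)))"

definition ordered_edges :: "'a set \<Rightarrow> ('a \<Rightarrow> 'a \<Rightarrow> bool) \<Rightarrow> ('a \<times> 'a) set" where
  "ordered_edges V E = {(u, v). u \<in> V \<and> v \<in> V \<and> E u v}"

definition eb_colors :: "nat \<Rightarrow> 'a set \<Rightarrow> ('a \<Rightarrow> 'a \<Rightarrow> bool) \<Rightarrow> color multiset" where
  "eb_colors l V E = image_mset (\<lambda>(u, v). eb l V E u v) (mset_set (ordered_edges V E))"

definition eb_distinguishable ::
  "'a set \<Rightarrow> ('a \<Rightarrow> 'a \<Rightarrow> bool) \<Rightarrow> 'b set \<Rightarrow> ('b \<Rightarrow> 'b \<Rightarrow> bool) \<Rightarrow> bool" where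
  "eb_distinguishable V E V' E' \<longleftrightarrow>
     card V \<noteq> card V' \<or> (\<exists>l. eb_colors l V E \<noteq> eb_colors l V' E')"

fun nc :: "nat \<Rightarrow> 'a set \<Rightarrow> ('a \<Rightarrow> 'a \<Rightarrow> bool) \<Rightarrow> 'a \<Rightarrow> color" where
  "nc 0 V E v = CInit"
| "nc (Suc l) V E v =
     CNC (nc l V E v)
         (image_mset (\<lambda>u. nc l V E u) (mset_set (nbhd V E v)))
         (image_mset (\<lambda>(u, w). (nc l V E u, nc l V E w))
             (mset_set {(u, w). u \<in> nbhd V E v \<and> w \<in> nbhd V E v \<and> E u w}))"

definition nc_colors :: "nat \<Rightarrow> 'a set \<Rightarrow> ('a \<Rightarrow> 'a \<Rightarrow> bool) \<Rightarrow> color multiset" where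
  "nc_colors l V E = image_mset (nc l V E) (mset_set V)"

definition nc_distinguishable ::
  "'a set \<Rightarrow> ('a \<Rightarrow> 'a \<Rightarrow> bool) \<Rightarrow> 'b set \<Rightarrow> ('b \<Rightarrow> 'b \<Rightarrow> bool) \<Rightarrow> bool" where
  "nc_distinguishable V E V' E' \<longleftrightarrow> (\<exists>l. nc_colors l V E \<noteq> nc_colors l V' E')"

definition Z16 :: "int set" where
  "Z16 = {0..<16}"

definition G_adj :: "int \<Rightarrow> int \<Rightarrow> bool" where
  "G_adj i j \<longleftrightarrow> (i - j) mod 16 \<in> {1, 15, 2, 14, 4, 12}"

definition H_adj :: "int \<Rightarrow> int \<Rightarrow> bool" where
  "H_adj i j \<longleftrightarrow> (i - j) mod 16 \<in> {1, 15, 3, 13, 4, 12}"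

end

theory Submission
  imports Defs
begin

text \<open>Both graphs are 6-regular circulants in which every neighbourhood spans exactly six
edges. On such graphs NC-1WL refines nothing: by induction every vertex keeps the same colour
at every round, so the two colour multisets coincide. EB-1WL, however, records in its first
round the number of common neighbours of the endpoints of each edge. In H every edge has two
common neighbours, whereas the edge {0, 4} of G has only one (namely 2).\<close>

lemma mset_set_image_const:
  assumes "\<And>x. x \<in> A \<Longrightarrow> f x = c"
  shows "image_mset f (mset_set A) = replicate_mset (card A) c"
proof -
  have "image_mset f (mset_set A) = image_mset (\<lambda>_. c) (mset_set A)"
    using assms by (cases "finite A") (auto intro: image_mset_cong)
  then show ?thesis by (simp add: image_mset_const_eq)
qed

definition nbhd_edges :: "'a set \<Rightarrow> ('a \<Rightarrow> 'a \<Rightarrow> bool) \<Rightarrow> 'a \<Rightarrow> ('a \<times> 'a) set" where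
  "nbhd_edges V E v = {(u, w). u \<in> nbhd V E v \<and> w \<in> nbhd V E v \<and> E u w}"

text \<open>The round-\<open>l\<close> NC colour shared by all vertices of a \<open>d\<close>-regular graph whose
neighbourhoods all span \<open>t\<close> ordered edges.\<close>

fun nc_regular_color :: "nat \<Rightarrow> nat \<Rightarrow> nat \<Rightarrow> color" where
  "nc_regular_color d t 0 = CInit"
| "nc_regular_color d t (Suc l) =
     CNC (nc_regular_color d t l) (replicate_mset d (nc_regular_color d t l))
         (replicate_mset t (nc_regular_color d t l, nc_regular_color d t l))"

locale nbhd_regular_graph =
  fixes V :: "'a set" and E :: "'a \<Rightarrow> 'a \<Rightarrow> bool" and d t :: nat
  assumes card_nbhd: "v \<in> V \<Longrightarrow> card (nbhd V E v) = d"
    and card_nbhd_edges: "v \<in> V \<Longrightarrow> card (nbhd_edges V E v) = t"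
begin

lemma nc_eq_nc_regular_color: "v \<in> V \<Longrightarrow> nc l V E v = nc_regular_color d t l"
proof (induction l arbitrary: v)
  case 0
  then show ?case by simp
next
  case (Suc l)
  have nbhd_sub: "nbhd V E v \<subseteq> V"
    unfolding nbhd_def by auto
  have "image_mset (nc l V E) (mset_set (nbhd V E v)) = replicate_mset d (nc_regular_color d t l)"
    using Suc nbhd_sub card_nbhd by (subst mset_set_image_const) auto
  moreover have "image_mset (\<lambda>(u, w). (nc l V E u, nc l V E w)) (mset_set (nbhd_edges V E v))
      = replicate_mset t (nc_regular_color d t l, nc_regular_color d t l)"
    using Suc nbhd_sub card_nbhd_edges unfolding nbhd_edges_def
    by (subst mset_set_image_const) auto
  ultimately show ?case
    using Suc by (simp add: nbhd_edges_def)
qed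

lemma nc_colors_eq: "nc_colors l V E = replicate_mset (card V) (nc_regular_color d t l)"
  unfolding nc_colors_def by (rule mset_set_image_const) (rule nc_eq_nc_regular_color)

end

lemma not_nc_distinguishable_nbhd_regular:
  assumes "nbhd_regular_graph V E d t" "nbhd_regular_graph V' E' d t" "card V = card V'"
  shows "\<not> nc_distinguishable V E V' E'"
  using assms by (simp add: nc_distinguishable_def nbhd_regular_graph.nc_colors_eq)

fun common_nbhd_count :: "color \<Rightarrow> nat" where
  "common_nbhd_count (CEB _ _ c _) = size c"
| "common_nbhd_count _ = 0"

lemma finite_nbhd: "finite V \<Longrightarrow> finite (nbhd V E v)"
  unfolding nbhd_def by simp

lemma common_nbhd_count_eb_Suc:
  "finite V \<Longrightarrow> common_nbhd_count (eb (Suc l) V E u v) = card (nbhd V E u \<inter> nbhd V E v)"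
  by (simp add: finite_nbhd)

lemma finite_ordered_edges: "finite V \<Longrightarrow> finite (ordered_edges V E)"
  unfolding ordered_edges_def
  by (rule finite_subset[of _ "V \<times> V"]) auto

lemma eb_distinguishable_by_common_nbhds:
  assumes "finite V" "finite V'"
    and "(u, v) \<in> ordered_edges V E" "card (nbhd V E u \<inter> nbhd V E v) = k"
    and "\<And>u' v'. (u', v') \<in> ordered_edges V' E' \<Longrightarrow> card (nbhd V' E' u' \<inter> nbhd V' E' v') \<noteq> k"
  shows "eb_distinguishable V E V' E'"
proof -
  have "k \<in># image_mset common_nbhd_count (eb_colors 1 V E)"
    using assms(1,3,4) by (force simp: eb_colors_def finite_ordered_edges common_nbhd_count_eb_Suc)
  moreover have "k \<notin># image_mset common_nbhd_count (eb_colors 1 V' E')"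
  proof
    assume "k \<in># image_mset common_nbhd_count (eb_colors 1 V' E')"
    then obtain u' v' where "(u', v') \<in> ordered_edges V' E'"
        "common_nbhd_count (eb 1 V' E' u' v') = k"
      using assms(2) by (auto simp: eb_colors_def finite_ordered_edges)
    then show False
      using assms(2,5) common_nbhd_count_eb_Suc[of V' 0] by auto
  qed
  ultimately have "eb_colors 1 V E \<noteq> eb_colors 1 V' E'"
    by metis
  then show ?thesis
    unfolding eb_distinguishable_def by blast
qed

lemma Z16_eq_upto: "Z16 = set [0..15]"
  unfolding Z16_def set_upto by auto

lemma finite_Z16: "finite Z16"
  unfolding Z16_def by simp

lemma nbhd_edges_eq_filter:
  "nbhd_edges V E v = Set.filter (\<lambda>(u, w). E u w) (nbhd V E v \<times> nbhd V E v)"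
  unfolding nbhd_edges_def by auto

lemma nbhd_regular_G: "nbhd_regular_graph Z16 G_adj 6 12"
proof -
  have "\<forall>v\<in>Z16. card (nbhd Z16 G_adj v) = 6"
    unfolding Z16_eq_upto nbhd_def G_adj_def by code_simp
  moreover have "\<forall>v\<in>Z16. card (nbhd_edges Z16 G_adj v) = 12"
    unfolding nbhd_edges_eq_filter Z16_eq_upto nbhd_def G_adj_def by code_simp
  ultimately show ?thesis
    by unfold_locales auto
qed

lemma nbhd_regular_H: "nbhd_regular_graph Z16 H_adj 6 12"
proof -
  have "\<forall>v\<in>Z16. card (nbhd Z16 H_adj v) = 6"
    unfolding Z16_eq_upto nbhd_def H_adj_def by code_simp
  moreover have "\<forall>v\<in>Z16. card (nbhd_edges Z16 H_adj v) = 12"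
    unfolding nbhd_edges_eq_filter Z16_eq_upto nbhd_def H_adj_def by code_simp
  ultimately show ?thesis
    by unfold_locales auto
qed

lemma card_common_nbhd_G_0_4: "card (nbhd Z16 G_adj 0 \<inter> nbhd Z16 G_adj 4) = 1"
  unfolding Z16_eq_upto nbhd_def G_adj_def by code_simp

lemma card_common_nbhd_H:
  "\<forall>u\<in>Z16. \<forall>v\<in>Z16. H_adj u v \<longrightarrow> card (nbhd Z16 H_adj u \<inter> nbhd Z16 H_adj v) = 2"
  unfolding Z16_eq_upto nbhd_def H_adj_def by code_simp

theorem mainTheorem4:
  shows "eb_distinguishable Z16 G_adj Z16 H_adj \<and> \<not> nc_distinguishable Z16 G_adj Z16 H_adj"
proof
  have "(0, 4) \<in> ordered_edges Z16 G_adj"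
    unfolding ordered_edges_def Z16_def G_adj_def by simp
  then show "eb_distinguishable Z16 G_adj Z16 H_adj"
    using finite_Z16 card_common_nbhd_G_0_4 card_common_nbhd_H
    by (intro eb_distinguishable_by_common_nbhds) (auto simp: ordered_edges_def)
  show "\<not> nc_distinguishable Z16 G_adj Z16 H_adj"
    using nbhd_regular_G nbhd_regular_H by (rule not_nc_distinguishable_nbhd_regular) simp
qed

end
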